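(* Let $\widetilde G=(\widetilde N,\widetilde E)$ be a directed graph in which every edge $(\tilde n_1,\tilde n_2)\in\widetilde E$ carries a delay $\widetilde D_{\tilde n_1,\tilde n_2}\ge 0$ and a reliability $\widetilde\eta_{\tilde n_1,\tilde n_2}\in(0,1]$. Let $D(s)>0$ be a target delay, $H(s)\in(0,1)$ a target reliability, and $\gamma$ a positive integer. Assign to each edge the weight $$\tilde w(\tilde n_1,\tilde n_2)=\Big(\tilde w_0,\tilde w_1\Big)=\left(\frac{\widetilde D_{\tilde n_1,\tilde n_2}}{D(s)},\ \frac{\log\widetilde\eta_{\tilde n_1,\tilde n_2}}{\log H(s)}\right).$$ Define the expanded graph as follows: its vertices are $\tilde n^{i,j}$ for every $\tilde n\in\widetilde N$ and all integers $0\le i,j\le\gamma$; for every edge $(\tilde n_1,\tilde n_2)\in\widetilde E$ (among those retained, e.g. those with sufficient capacity) and every $i,j$, there is an (unweighted) directed edge from $\tilde n_1^{i,j}$ to $\tilde n_2^{\,i+\lceil\gamma\tilde w_0(\tilde n_1,\tilde n_2)\rceil,\ j+\lceil\gamma \tilde w_1(\tilde n_1,\tilde n_2)\rceil}$ whenever both superscripts are at most $\gamma$ (otherwise no edge is created). Then for any path in the expanded graph starting at a vertex of the form $e^{0,0}$, the corresponding path $e=\tilde n_0,\tilde n_1,\dots,\tilde n_m$ in $\widetilde G$ satisfies $$\sum_{k=1}^{m}\widetilde D_{\tilde n_{k-1},\tilde n_k}\le D(s)\quad\text{and}\quad\prod_{k=1}^{m}\widetilde\eta_{\tilde n_{k-1},\tilde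 n_k}\ge H(s),$$ i.e. it honors the additive KPI targets (network delay and reliability).
   Context: In the paper's network-slicing setting, $\widetilde G$ is the "decision graph": its vertices are service endpoints and computation-capable nodes (with replicas), and an edge $(\tilde n_1,\tilde n_2)$ represents deploying a virtual network function at $\tilde n_1$ and the next one at $\tilde n_2$, connected via a virtual link whose delay is the sum of the delays and whose reliability is the product of the reliabilities of the physical links and nodes composing it. The vertex $e^{0,0}$ is the copy of an endpoint $e$ with both superscripts equal to zero. *)

theory Defs
  imports Complex_Main
begin

definition w0 :: "('v \<Rightarrow> 'v \<Rightarrow> real) \<Rightarrow> real \<Rightarrow> 'v \<Rightarrow> 'v \<Rightarrow> real" where
  "w0 Dl Ds n1 n2 = Dl n1 n2 / Ds"

definition w1 :: "('v \<Rightarrow> 'v \<Rightarrow> real) \<Rightarrow> real \<Rightarrow> 'v \<Rightarrow> 'v \<Rightarrow> real" where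
  "w1 eta Hs n1 n2 = ln (eta n1 n2) / ln Hs"

definition exp_vertices :: "'v set \<Rightarrow> nat \<Rightarrow> ('v \<times> nat \<times> nat) set" where
  "exp_vertices N \<gamma> = N \<times> {0..\<gamma>} \<times> {0..\<gamma>}"

definition exp_edges ::
  "'v set \<Rightarrow> ('v \<times> 'v) set \<Rightarrow> ('v \<Rightarrow> 'v \<Rightarrow> real) \<Rightarrow> ('v \<Rightarrow> 'v \<Rightarrow> real)
   \<Rightarrow> real \<Rightarrow> real \<Rightarrow> nat \<Rightarrow> (('v \<times> nat \<times> nat) \<times> ('v \<times> nat \<times> nat)) set" where
  "exp_edges N E Dl eta Ds Hs \<gamma> =
     {((n1, i, j), (n2, i', j')) | n1 n2 i j i' j'.
        (n1, n2) \<in> E \<and> i \<le> \<gamma> \<and> j \<le> \<gamma> \<and>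
        int i' = int i + \<lceil>real \<gamma> * w0 Dl Ds n1 n2\<rceil> \<and>
        int j' = int j + \<lceil>real \<gamma> * w1 eta Hs n1 n2\<rceil> \<and>
        i' \<le> \<gamma> \<and> j' \<le> \<gamma>}"

definition is_path :: "'a set \<Rightarrow> ('a \<times> 'a) set \<Rightarrow> 'a list \<Rightarrow> bool" where
  "is_path V A ps \<longleftrightarrow> ps \<noteq> [] \<and> set ps \<subseteq> V \<and>
     (\<forall>k. Suc k < length ps \<longrightarrow> (ps ! k, ps ! Suc k) \<in> A)"

end

theory Submission
  imports Defs
begin

text \<open>Every edge of the expanded graph raises the first superscript by at least \<open>\<gamma> w\<^sub>0\<close> and
  the second by at least \<open>\<gamma> w\<^sub>1\<close>. Telescoping along a path from a vertex with superscripts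
  \<open>(0,0)\<close> to a vertex with superscripts at most \<open>\<gamma>\<close> shows that both weight sums are at most 1.
  Since \<open>D(s) > 0\<close> and \<open>log H(s) < 0\<close>, these two inequalities are exactly the delay bound and,
  after exponentiating, the reliability bound.\<close>

lemma exp_edge_levels:
  assumes "((n1, i, j), (n2, i', j')) \<in> exp_edges N E Dl eta Ds Hs \<gamma>"
  shows "(n1, n2) \<in> E"
    and "real \<gamma> * w0 Dl Ds n1 n2 \<le> real i' - real i"
    and "real \<gamma> * w1 eta Hs n1 n2 \<le> real j' - real j"
proof -
  from assms have E: "(n1, n2) \<in> E"
    and i': "int i' = int i + \<lceil>real \<gamma> * w0 Dl Ds n1 n2\<rceil>"
    and j': "int j' = int j + \<lceil>real \<gamma> * w1 eta Hs n1 n2\<rceil>"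
    unfolding exp_edges_def by auto
  have "real i' = real i + of_int \<lceil>real \<gamma> * w0 Dl Ds n1 n2\<rceil>"
    using arg_cong[OF i', of real_of_int] by simp
  moreover have "real j' = real j + of_int \<lceil>real \<gamma> * w1 eta Hs n1 n2\<rceil>"
    using arg_cong[OF j', of real_of_int] by simp
  ultimately show "(n1, n2) \<in> E"
    and "real \<gamma> * w0 Dl Ds n1 n2 \<le> real i' - real i"
    and "real \<gamma> * w1 eta Hs n1 n2 \<le> real j' - real j"
    using E le_of_int_ceiling by auto
qed

lemma sum_le_1_of_level_increments:
  fixes level :: "nat \<Rightarrow> nat" and w :: "nat \<Rightarrow> real"
  assumes "\<gamma> > 0" and "level 0 = 0" and "level m \<le> \<gamma>"
    and "\<And>k. k < m \<Longrightarrow> real \<gamma> * w k \<le> real (level (Suc k)) - real (level k)"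
  shows "(\<Sum>k<m. w k) \<le> 1"
proof -
  have "real \<gamma> * (\<Sum>k<m. w k) = (\<Sum>k<m. real \<gamma> * w k)"
    by (simp add: sum_distrib_left)
  also have "\<dots> \<le> (\<Sum>k<m. real (level (Suc k)) - real (level k))"
    using assms(4) by (intro sum_mono) simp
  also have "\<dots> = real (level m)"
    using assms(2) sum_lessThan_telescope[of "\<lambda>k. real (level k)" m] by simp
  also have "\<dots> \<le> real \<gamma> * 1"
    using assms(3) by simp
  finally show ?thesis
    using assms(1) by simp
qed

lemma sum_le_of_sum_divide_le_1:
  fixes f :: "'a \<Rightarrow> real"
  assumes "D > 0" and "(\<Sum>x\<in>A. f x / D) \<le> 1"
  shows "(\<Sum>x\<in>A. f x) \<le> D"
  using assms by (simp add: sum_divide_distrib[symmetric])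

lemma prod_ge_of_sum_ln_divide_le_1:
  fixes p :: "'a \<Rightarrow> real"
  assumes "0 < H" "H < 1" and pos: "\<And>x. x \<in> A \<Longrightarrow> 0 < p x"
    and "(\<Sum>x\<in>A. ln (p x) / ln H) \<le> 1"
  shows "H \<le> (\<Prod>x\<in>A. p x)"
proof -
  have "ln H \<le> (\<Sum>x\<in>A. ln (p x))"
    using assms(1,2,4) by (simp add: sum_divide_distrib[symmetric] divide_le_eq)
  also have "\<dots> = ln (\<Prod>x\<in>A. p x)"
    using pos by (cases "finite A") (auto simp: ln_prod[symmetric] less_imp_neq[symmetric])
  finally show ?thesis
    using assms(1) pos by (simp add: prod_pos)
qed

theorem lemma1:
  fixes N :: "'v set" and E :: "('v \<times> 'v) set"
    and Dl eta :: "'v \<Rightarrow> 'v \<Rightarrow> real"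
    and Ds Hs :: real and \<gamma> :: nat
    and e :: 'v and ps :: "('v \<times> nat \<times> nat) list"
  assumes E_sub: "E \<subseteq> N \<times> N"
    and D_nonneg: "\<And>n1 n2. (n1, n2) \<in> E \<Longrightarrow> Dl n1 n2 \<ge> 0"
    and eta_pos: "\<And>n1 n2. (n1, n2) \<in> E \<Longrightarrow> 0 < eta n1 n2 \<and> eta n1 n2 \<le> 1"
    and Ds_pos: "Ds > 0"
    and Hs_range: "0 < Hs" "Hs < 1"
    and gamma_pos: "\<gamma> > 0"
    and path: "is_path (exp_vertices N \<gamma>) (exp_edges N E Dl eta Ds Hs \<gamma>) ps"
    and start: "hd ps = (e, 0, 0)"
  shows "(\<Sum>k<length ps - 1. Dl (fst (ps ! k)) (fst (ps ! Suc k))) \<le> Ds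
       \<and> (\<Prod>k<length ps - 1. eta (fst (ps ! k)) (fst (ps ! Suc k))) \<ge> Hs"
proof -
  define m where "m = length ps - 1"
  define n a b where "n k = fst (ps ! k)" and "a k = fst (snd (ps ! k))"
    and "b k = snd (snd (ps ! k))" for k
  have ps_nth: "ps ! k = (n k, a k, b k)" for k
    by (simp add: n_def a_def b_def)
  have "ps \<noteq> []" and "ps ! m \<in> exp_vertices N \<gamma>"
    using path by (auto simp: is_path_def m_def)
  then have start_levels: "a 0 = 0" "b 0 = 0" and end_levels: "a m \<le> \<gamma>" "b m \<le> \<gamma>"
    using start by (auto simp: ps_nth exp_vertices_def hd_conv_nth)
  have "(ps ! k, ps ! Suc k) \<in> exp_edges N E Dl eta Ds Hs \<gamma>" if "k < m" for k
    using path that by (auto simp: is_path_def m_def)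
  note step = exp_edge_levels[OF this[unfolded ps_nth]]
  have "(\<Sum>k<m. Dl (n k) (n (Suc k)) / Ds) \<le> 1"
    using sum_le_1_of_level_increments[OF gamma_pos start_levels(1) end_levels(1)] step(2)
    by (simp add: w0_def)
  then have delay: "(\<Sum>k<m. Dl (n k) (n (Suc k))) \<le> Ds"
    by (rule sum_le_of_sum_divide_le_1[OF Ds_pos])
  have "(\<Sum>k<m. ln (eta (n k) (n (Suc k))) / ln Hs) \<le> 1"
    using sum_le_1_of_level_increments[OF gamma_pos start_levels(2) end_levels(2)] step(3)
    by (simp add: w1_def)
  then have reliability: "Hs \<le> (\<Prod>k<m. eta (n k) (n (Suc k)))"
    using eta_pos step(1) by (intro prod_ge_of_sum_ln_divide_le_1[OF Hs_range]) auto
  show ?thesis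
    using delay reliability by (simp add: m_def n_def)
qed

end
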